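(* Let $\mu\in\mathbb{C}$ with $|\mu|\ge1$, and let $T_\mu$ be the operator on the space $H(\mathbb{C})$ of entire functions (with the compact-open topology) defined by $(T_\mu f)(z)=f'(\mu z)$. Then $T_\mu$ is frequently hypercyclic on $H(\mathbb{C})$.
   Context: An operator $T$ on a separable topological vector space $X$ is frequently hypercyclic if there is $x\in X$ such that for every nonempty open $U\subset X$ the set $A=\{n\in\mathbb{N}:T^nx\in U\}$ has positive lower density $\liminf_{N\to\infty}\mathrm{card}\{n\in A:n\le N\}/N>0$. *)

theory Defs
  imports "HOL-Analysis.Analysis"
begin

definition entire_fns :: "(complex \<Rightarrow> complex) set" where
  "entire_fns = {f. f holomorphic_on UNIV}"

text \<open>Compact-open topology on H(C) (= topology of uniform convergence on compact sets):
  U is open iff every f in U has a neighbourhood {g. sup over K of |g - f| < e} inside U,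
  with K compact and e > 0.\<close>
definition co_open :: "(complex \<Rightarrow> complex) set \<Rightarrow> bool" where
  "co_open U \<longleftrightarrow> U \<subseteq> entire_fns \<and>
     (\<forall>f\<in>U. \<exists>K e. compact K \<and> e > 0 \<and>
        {g \<in> entire_fns. \<forall>z\<in>K. cmod (g z - f z) < e} \<subseteq> U)"

lemma istopology_co_open: "istopology co_open"
  unfolding istopology_def
proof (intro conjI allI impI)
  fix S T assume S: "co_open S" and T: "co_open T"
  show "co_open (S \<inter> T)"
    unfolding co_open_def
  proof (intro conjI ballI)
    show "S \<inter> T \<subseteq> entire_fns" using S unfolding co_open_def by blast
  next
    fix f assume f: "f \<in> S \<inter> T"
    obtain K1 e1 where 1: "compact K1" "e1 > 0"
      "{g \<in> entire_fns. \<forall>z\<in>K1. cmod (g z - f z) < e1} \<subseteq> S"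
      using S f unfolding co_open_def by blast
    obtain K2 e2 where 2: "compact K2" "e2 > 0"
      "{g \<in> entire_fns. \<forall>z\<in>K2. cmod (g z - f z) < e2} \<subseteq> T"
      using T f unfolding co_open_def by blast
    show "\<exists>K e. compact K \<and> e > 0 \<and>
        {g \<in> entire_fns. \<forall>z\<in>K. cmod (g z - f z) < e} \<subseteq> S \<inter> T"
    proof (intro exI conjI)
      show "compact (K1 \<union> K2)" using 1 2 by auto
      show "min e1 e2 > 0" using 1 2 by auto
      show "{g \<in> entire_fns. \<forall>z\<in>K1 \<union> K2. cmod (g z - f z) < min e1 e2} \<subseteq> S \<inter> T"
      proof
        fix g assume g: "g \<in> {g \<in> entire_fns. \<forall>z\<in>K1 \<union> K2. cmod (g z - f z) < min e1 e2}"
        then have "g \<in> {g \<in> entire_fns. \<forall>z\<in>K1. cmod (g z - f z) < e1}" by auto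
        moreover have "g \<in> {g \<in> entire_fns. \<forall>z\<in>K2. cmod (g z - f z) < e2}" using g by auto
        ultimately show "g \<in> S \<inter> T" using 1(3) 2(3) by blast
      qed
    qed
  qed
next
  fix \<K> assume H: "\<forall>K\<in>\<K>. co_open K"
  show "co_open (\<Union>\<K>)"
    unfolding co_open_def
  proof (intro conjI ballI)
    show "\<Union>\<K> \<subseteq> entire_fns" using H unfolding co_open_def by (simp add: Sup_le_iff)
  next
    fix f assume "f \<in> \<Union>\<K>"
    then obtain U where U: "U \<in> \<K>" "f \<in> U" by blast
    have "co_open U" using H U(1) by blast
    then obtain K e where "compact K" "e > 0"
      "{g \<in> entire_fns. \<forall>z\<in>K. cmod (g z - f z) < e} \<subseteq> U"
      using U(2) unfolding co_open_def by blast
    then show "\<exists>K e. compact K \<and> e > 0 \<and>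
        {g \<in> entire_fns. \<forall>z\<in>K. cmod (g z - f z) < e} \<subseteq> \<Union>\<K>"
      using U by blast
  qed
qed

definition H_C :: "(complex \<Rightarrow> complex) topology" where
  "H_C = topology co_open"

definition lower_density :: "nat set \<Rightarrow> ereal" where
  "lower_density A = liminf (\<lambda>N. ereal (real (card {n \<in> A. 1 \<le> n \<and> n \<le> N}) / real N))"

definition frequently_hypercyclic :: "'a topology \<Rightarrow> ('a \<Rightarrow> 'a) \<Rightarrow> bool" where
  "frequently_hypercyclic X T \<longleftrightarrow>
     (\<exists>x\<in>topspace X. \<forall>U. openin X U \<and> U \<noteq> {} \<longrightarrow>
        lower_density {n. (T ^^ n) x \<in> U} > 0)"

definition T_op :: "complex \<Rightarrow> (complex \<Rightarrow> complex) \<Rightarrow> (complex \<Rightarrow> complex)" where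
  "T_op \<mu> f = (\<lambda>z. deriv f (\<mu> * z))"

end

theory Submission
  imports Defs "HOL-Complex_Analysis.Cauchy_Integral_Formula"
begin

(* An entire function is a power series  f = \<Sum> a_j z^j  with coefficients decaying
   faster than any geometric sequence, and T_\<mu> acts on coefficients as a weighted backward shift:
   (T_\<mu>^N f)(z) = \<Sum> a_(j+N) W(j,N) z^j, where |W(j,N)| \<ge> (j+N)!/j! because |\<mu>| \<ge> 1.
   Enumerate all pairs (p_k, R_k) of a polynomial with Gaussian-rational coefficients and an
   integer radius; they are dense in H(\<complex>).  We build pairwise disjoint sets A_k \<subseteq> \<nat>, each
   of positive lower density, whose elements are far apart (the gaps grow with k), and let x be
   the power series that places the coefficients of p_k, divided by the weights, at the
   positions n, n+1, ..., n + deg p_k for every n \<in> A_k.  For n \<in> A_k the iterate T^n x equals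
   p_k up to a tail controlled by the bound (2R_k)^j/j!, hence lies within 1/(R_k+1) of p_k on
   the disc of radius R_k.  So every nonempty open set contains T^n x for all n in some A_k. *)

section \<open>T_\<mu> as a weighted backward shift on power series\<close>

text \<open>The weight picked up by the coefficient at position i+n after n applications of T_\<mu>.\<close>
fun shift_weight :: "complex \<Rightarrow> nat \<Rightarrow> nat \<Rightarrow> complex" where
  "shift_weight \<mu> i 0 = 1"
| "shift_weight \<mu> i (Suc n) = of_nat (Suc i) * \<mu>^i * shift_weight \<mu> (Suc i) n"

lemma shift_weight_add:
  "shift_weight \<mu> i (m + n) = shift_weight \<mu> i m * shift_weight \<mu> (i + m) n"
  by (induction m arbitrary: i) (simp_all add: algebra_simps)

lemma fact_le_shift_weight:
  assumes "norm \<mu> \<ge> 1"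
  shows "fact (i + n) \<le> norm (shift_weight \<mu> i n) * fact i"
proof (induction n arbitrary: i)
  case 0 then show ?case by simp
next
  case (Suc n)
  have pow: "1 \<le> norm \<mu> ^ i" using assms by (simp add: one_le_power)
  have "fact (i + Suc n) = (fact (Suc i + n) :: real)" by simp
  also have "\<dots> \<le> norm (shift_weight \<mu> (Suc i) n) * fact (Suc i)" by (rule Suc)
  also have "\<dots> = real (Suc i) * norm (shift_weight \<mu> (Suc i) n) * fact i"
    by (simp add: algebra_simps)
  also have "\<dots> \<le> real (Suc i) * norm \<mu> ^ i * norm (shift_weight \<mu> (Suc i) n) * fact i"
    using pow by (simp add: mult_right_mono mult_left_mono)
  also have "\<dots> = norm (shift_weight \<mu> i (Suc n)) * fact i"
    by (simp only: shift_weight.simps norm_mult norm_power norm_of_nat)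
  finally show ?case .
qed

lemma shift_weight_nonzero: "norm \<mu> \<ge> 1 \<Longrightarrow> shift_weight \<mu> i n \<noteq> 0"
  using fact_le_shift_weight[of \<mu> i n] by (metis fact_gt_zero mult_eq_0_iff norm_zero not_le)

lemma inverse_shift_weight_le:
  assumes "norm \<mu> \<ge> 1"
  shows "1 / norm (shift_weight \<mu> i n) \<le> fact i / fact (i + n)"
  using fact_le_shift_weight[OF assms, of i n] shift_weight_nonzero[OF assms, of i n]
  by (simp add: divide_simps mult.commute)

definition power_series :: "(nat \<Rightarrow> complex) \<Rightarrow> complex \<Rightarrow> complex" where
  "power_series a z = (\<Sum>n. a n * z^n)"

definition entire_coeffs :: "(nat \<Rightarrow> complex) \<Rightarrow> bool" where
  "entire_coeffs a \<longleftrightarrow> (\<forall>z. summable (\<lambda>n. a n * z^n))"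

lemma power_series_deriv:
  "entire_coeffs a \<Longrightarrow> (power_series a has_field_derivative power_series (diffs a) w) (at w)"
  unfolding entire_coeffs_def power_series_def[abs_def]
  by (rule termdiffs_strong_converges_everywhere) auto

lemma power_series_entire: "entire_coeffs a \<Longrightarrow> power_series a \<in> entire_fns"
  unfolding entire_fns_def using power_series_deriv
  by (auto simp: holomorphic_on_def field_differentiable_def intro: has_field_derivative_at_within)

lemma T_op_power_series:
  assumes "entire_coeffs a"
  shows "T_op \<mu> (power_series a) = power_series (\<lambda>j. diffs a j * \<mu>^j)"
    and "entire_coeffs (\<lambda>j. diffs a j * \<mu>^j)"
proof -
  show "T_op \<mu> (power_series a) = power_series (\<lambda>j. diffs a j * \<mu>^j)"
  proof
    fix z
    have "deriv (power_series a) (\<mu> * z) = power_series (diffs a) (\<mu> * z)"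
      using power_series_deriv[OF assms] by (rule DERIV_imp_deriv)
    then show "T_op \<mu> (power_series a) z = power_series (\<lambda>j. diffs a j * \<mu>^j) z"
      by (simp add: T_op_def power_series_def power_mult_distrib mult.assoc)
  qed
  show "entire_coeffs (\<lambda>j. diffs a j * \<mu>^j)"
    unfolding entire_coeffs_def
  proof
    fix z
    have "summable (\<lambda>n. diffs a n * (\<mu> * z)^n)"
      using assms unfolding entire_coeffs_def by (intro termdiff_converges_all) auto
    then show "summable (\<lambda>n. diffs a n * \<mu>^n * z^n)" by (simp add: power_mult_distrib mult.assoc)
  qed
qed

lemma T_op_iterate_power_series:
  assumes "entire_coeffs c"
  shows "(T_op \<mu> ^^ N) (power_series c) = power_series (\<lambda>j. c (j + N) * shift_weight \<mu> j N)
     \<and> entire_coeffs (\<lambda>j. c (j + N) * shift_weight \<mu> j N)"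
proof (induction N)
  case 0 then show ?case using assms by simp
next
  case (Suc N)
  have "(\<lambda>j. diffs (\<lambda>j. c (j + N) * shift_weight \<mu> j N) j * \<mu>^j)
      = (\<lambda>j. c (j + Suc N) * shift_weight \<mu> j (Suc N))"
    by (auto simp: diffs_def algebra_simps)
  then show ?case using Suc T_op_power_series[of "\<lambda>j. c (j + N) * shift_weight \<mu> j N" \<mu>] by simp
qed

lemma summable_exp_series: "summable (\<lambda>n. (x::real)^n / fact n)"
  using summable_exp[of x] by (simp add: field_simps)

lemma entire_coeffs_if_fact_bound:
  assumes "\<And>n. norm (a n) \<le> 2^n / fact n"
  shows "entire_coeffs a"
  unfolding entire_coeffs_def
proof
  fix z :: complex
  show "summable (\<lambda>n. a n * z^n)"
  proof (rule summable_comparison_test'[OF summable_exp_series[of "2 * norm z"]])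
    fix n
    have "norm (a n * z^n) = norm (a n) * norm z ^ n" by (simp add: norm_mult norm_power)
    also have "\<dots> \<le> 2^n / fact n * norm z ^ n" by (intro mult_right_mono assms) auto
    also have "\<dots> = (2 * norm z)^n / fact n" by (simp add: power_mult_distrib)
    finally show "norm (a n * z^n) \<le> (2 * norm z)^n / fact n" .
  qed
qed

lemma late_series_bound:
  fixes g :: "nat \<Rightarrow> complex"
  assumes g: "\<And>j. g j = 0 \<or> (J < j \<and> norm (g j) \<le> 2^j / fact j)" and z: "norm z \<le> R"
  shows "norm (\<Sum>j. g j * z^j) \<le> (\<Sum>i. (2*R)^(i + J + 1) / fact (i + J + 1))"
proof -
  have "norm (g j) \<le> 2^j / fact j" for j using g[of j] by (cases "g j = 0") auto
  then have "entire_coeffs g" by (rule entire_coeffs_if_fact_bound)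
  then have sum_g: "summable (\<lambda>j. g j * z^j)" unfolding entire_coeffs_def by blast
  have "(\<Sum>j. g j * z^j) = (\<Sum>i. g (i + (J + 1)) * z^(i + (J + 1))) + (\<Sum>j<J + 1. g j * z^j)"
    by (rule suminf_split_initial_segment[OF sum_g])
  also have "(\<Sum>j<J + 1. g j * z^j) = 0"
  proof (intro sum.neutral ballI)
    fix j assume "j \<in> {..<J + 1}"
    then show "g j * z^j = 0" using g[of j] by auto
  qed
  finally have "norm (\<Sum>j. g j * z^j) = norm (\<Sum>i. g (i + J + 1) * z^(i + J + 1))"
    by (simp add: add.assoc)
  also have "\<dots> \<le> (\<Sum>i. (2*R)^(i + J + 1) / fact (i + J + 1))"
  proof (rule norm_suminf_le)
    have "summable (\<lambda>i. (2*R)^(i + (J + 1)) / fact (i + (J + 1)))"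
      using summable_exp_series[of "2*R"] by (subst summable_iff_shift)
    then show "summable (\<lambda>i. (2*R)^(i + J + 1) / fact (i + J + 1))" by (simp add: add.assoc)
    fix i
    have "norm (g (i + J + 1) * z^(i + J + 1)) \<le> 2^(i + J + 1) / fact (i + J + 1) * R^(i + J + 1)"
      unfolding norm_mult norm_power using g[of "i + J + 1"] z by (intro mult_mono power_mono) auto
    also have "\<dots> = (2*R)^(i + J + 1) / fact (i + J + 1)" unfolding power_mult_distrib by simp
    finally show "norm (g (i + J + 1) * z^(i + J + 1)) \<le> (2*R)^(i + J + 1) / fact (i + J + 1)" .
  qed
  finally show ?thesis .
qed

section \<open>Approximation by polynomials with Gaussian-rational coefficients\<close>

definition gauss_rat :: "rat \<times> rat \<Rightarrow> complex" where
  "gauss_rat p = Complex (of_rat (fst p)) (of_rat (snd p))"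

text \<open>The polynomial with coefficient list L; there are countably many of these.\<close>
definition rat_poly :: "(rat \<times> rat) list \<Rightarrow> complex \<Rightarrow> complex" where
  "rat_poly L z = (\<Sum>j<length L. gauss_rat (L!j) * z^j)"

lemma gauss_rat_dense:
  assumes "e > 0"
  shows "\<exists>p. norm (w - gauss_rat p) < e"
proof -
  obtain a where a: "a \<in> \<rat>" "Re w - e/2 < a" "a < Re w + e/2"
    using Rats_dense_in_real[of "Re w - e/2" "Re w + e/2"] assms by auto
  obtain b where b: "b \<in> \<rat>" "Im w - e/2 < b" "b < Im w + e/2"
    using Rats_dense_in_real[of "Im w - e/2" "Im w + e/2"] assms by auto
  obtain a' b' where ab: "a = of_rat a'" "b = of_rat b'" using a(1) b(1) Rats_cases by metis
  have "norm (w - gauss_rat (a', b'))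
      \<le> \<bar>Re (w - gauss_rat (a', b'))\<bar> + \<bar>Im (w - gauss_rat (a', b'))\<bar>"
    by (rule cmod_le)
  also have "\<dots> < e" using a b ab by (simp add: gauss_rat_def abs_less_iff)
  finally show ?thesis by blast
qed

text \<open>Truncated Taylor series of an entire function converge uniformly on discs.\<close>
lemma entire_taylor_poly_approx:
  fixes f :: "complex \<Rightarrow> complex"
  assumes hol: "f holomorphic_on UNIV" and \<delta>: "\<delta> > 0"
  shows "\<exists>c D. \<forall>z. norm z \<le> R \<longrightarrow> norm (f z - (\<Sum>n<D. c n * z^n)) < \<delta>"
proof -
  define a where "a n = (deriv ^^ n) f 0 / fact n" for n
  have sums: "(\<lambda>n. a n * z^n) sums f z" for z
  proof -
    have "z \<in> ball 0 (norm z + 1)" by simp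
    from holomorphic_power_series[OF holomorphic_on_subset[OF hol] this]
    show ?thesis by (simp add: a_def)
  qed
  define R' where "R' = max R 0"
  have sum_R: "summable (\<lambda>n. norm (a n) * R'^n)"
  proof -
    have "summable (\<lambda>n. a n * (of_real (R' + 1))^n)" using sums sums_summable by blast
    from powser_insidea[OF this, of "of_real R'"]
    show ?thesis by (simp add: R'_def norm_mult norm_power)
  qed
  obtain D where D: "\<forall>n\<ge>D. norm (\<Sum>i. norm (a (i + n)) * R'^(i + n)) < \<delta>"
    using suminf_exist_split[OF \<delta> sum_R] by auto
  have "norm (f z - (\<Sum>n<D. a n * z^n)) < \<delta>" if z: "norm z \<le> R" for z
  proof -
    have "f z = (\<Sum>n. a n * z^n)" using sums sums_unique by metis
    also have "\<dots> = (\<Sum>i. a (i + D) * z^(i + D)) + (\<Sum>n<D. a n * z^n)"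
      using sums sums_summable by (intro suminf_split_initial_segment) blast
    finally have "f z - (\<Sum>n<D. a n * z^n) = (\<Sum>i. a (i + D) * z^(i + D))" by simp
    also have "norm \<dots> \<le> (\<Sum>i. norm (a (i + D)) * R'^(i + D))"
    proof (rule norm_suminf_le)
      show "summable (\<lambda>i. norm (a (i + D)) * R'^(i + D))"
        using sum_R by (subst summable_iff_shift)
      show "norm (a (i + D) * z^(i + D)) \<le> norm (a (i + D)) * R'^(i + D)" for i
        using z by (simp add: norm_mult norm_power R'_def mult_left_mono power_mono)
    qed
    also have "\<dots> < \<delta>" using D by auto
    finally show ?thesis .
  qed
  then show ?thesis by blast
qed

text \<open>Rounding the coefficients of a polynomial to Gaussian rationals.\<close>
lemma rat_poly_approx_poly:
  assumes \<delta>: "\<delta> > 0"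
  shows "\<exists>L. \<forall>z. norm z \<le> R \<longrightarrow> norm ((\<Sum>n<D. c n * z^n) - rat_poly L z) < \<delta>"
proof -
  define S where "S = (\<Sum>n<D. (max R 0)^n)"
  have S0: "S \<ge> 0" unfolding S_def by (intro sum_nonneg) auto
  define \<eta> where "\<eta> = \<delta> / (S + 1)"
  have \<eta>: "\<eta> > 0" using \<delta> S0 by (simp add: \<eta>_def)
  define g where "g n = (SOME p. norm (c n - gauss_rat p) < \<eta>)" for n
  have g: "norm (c n - gauss_rat (g n)) < \<eta>" for n
    unfolding g_def by (rule someI_ex, rule gauss_rat_dense[OF \<eta>])
  have "norm ((\<Sum>n<D. c n * z^n) - rat_poly (map g [0..<D]) z) < \<delta>" if z: "norm z \<le> R" for z
  proof -
    have "(\<Sum>n<D. c n * z^n) - rat_poly (map g [0..<D]) z = (\<Sum>n<D. (c n - gauss_rat (g n)) * z^n)"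
      by (simp add: rat_poly_def sum_subtractf algebra_simps)
    also have "norm \<dots> \<le> (\<Sum>n<D. norm ((c n - gauss_rat (g n)) * z^n))" by (rule norm_sum)
    also have "\<dots> \<le> (\<Sum>n<D. \<eta> * (max R 0)^n)"
    proof (rule sum_mono)
      fix n
      have "norm z ^ n \<le> (max R 0)^n" using z by (intro power_mono) auto
      then show "norm ((c n - gauss_rat (g n)) * z^n) \<le> \<eta> * (max R 0)^n"
        using g[of n] \<eta> by (simp add: norm_mult norm_power mult_mono less_imp_le)
    qed
    also have "\<dots> = \<eta> * S" by (simp add: S_def sum_distrib_left)
    also have "\<dots> < \<delta>" using S0 \<delta> by (simp add: \<eta>_def field_simps)
    finally show ?thesis .
  qed
  then show ?thesis by blast
qed

lemma rat_poly_approx: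
  fixes f :: "complex \<Rightarrow> complex"
  assumes "f holomorphic_on UNIV" and "\<delta> > 0"
  shows "\<exists>L. \<forall>z. norm z \<le> R \<longrightarrow> norm (f z - rat_poly L z) < \<delta>"
proof -
  obtain c D where cD: "\<forall>z. norm z \<le> R \<longrightarrow> norm (f z - (\<Sum>n<D. c n * z^n)) < \<delta>/2"
    using entire_taylor_poly_approx[OF assms(1), of "\<delta>/2" R] assms(2) by auto
  obtain L where L: "\<forall>z. norm z \<le> R \<longrightarrow> norm ((\<Sum>n<D. c n * z^n) - rat_poly L z) < \<delta>/2"
    using rat_poly_approx_poly[where \<delta>="\<delta>/2" and R=R and D=D and c=c] assms(2) by auto
  have "norm (f z - rat_poly L z) < \<delta>" if "norm z \<le> R" for z
    using cD L that norm_triangle_lt[of "f z - (\<Sum>n<D. c n * z^n)" "(\<Sum>n<D. c n * z^n) - rat_poly L z" \<delta>]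
    by fastforce
  then show ?thesis by blast
qed

section \<open>Separated sets of positive lower density\<close>

text \<open>Given block lengths \<phi>, level k uses the residue class of P_k/2 modulo the period
  P_k = 2^(E_k); the exponents E_k grow fast enough that P_k is huge compared with \<phi>_k, with k
  and with all earlier periods.\<close>
fun block_exp :: "(nat \<Rightarrow> nat) \<Rightarrow> nat \<Rightarrow> nat" where
  "block_exp \<phi> 0 = \<phi> 0 + 6"
| "block_exp \<phi> (Suc k) = block_exp \<phi> k + \<phi> (Suc k) + 6"

definition period :: "(nat \<Rightarrow> nat) \<Rightarrow> nat \<Rightarrow> nat" where
  "period \<phi> k = 2 ^ block_exp \<phi> k"

definition centres :: "(nat \<Rightarrow> nat) \<Rightarrow> nat \<Rightarrow> nat set" where
  "centres \<phi> k = {N. N mod period \<phi> k = period \<phi> k div 2}"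

definition near :: "nat \<Rightarrow> nat \<Rightarrow> nat \<Rightarrow> bool" where
  "near r N n \<longleftrightarrow> N \<le> n + r \<and> n \<le> N + r"

definition sep_set :: "(nat \<Rightarrow> nat) \<Rightarrow> nat \<Rightarrow> nat set" where
  "sep_set \<phi> k = {N \<in> centres \<phi> k. \<forall>l>k. \<forall>n\<in>centres \<phi> l. \<not> near (\<phi> l) N n}"

lemma block_exp_ge: "block_exp \<phi> k \<ge> \<phi> k + 6" "block_exp \<phi> k \<ge> k + 6"
  by (induction k) auto

lemma block_exp_mono: "l \<le> k \<Longrightarrow> block_exp \<phi> l + (k - l) \<le> block_exp \<phi> k"
proof (induction k)
  case 0 then show ?case by simp
next
  case (Suc k) then show ?case by (cases "l = Suc k") auto
qed

lemma block_exp_gap: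
  assumes "l < k"
  shows "block_exp \<phi> l + (k - l) + \<phi> k + 5 \<le> block_exp \<phi> k"
proof (cases k)
  case (Suc k')
  then have "l \<le> k'" using assms by simp
  from block_exp_mono[OF this, of \<phi>] show ?thesis using Suc assms by simp
qed (use assms in simp)

lemma Suc_le_two_power: "Suc n \<le> (2::nat)^n"
  by (induction n) auto

lemma period_props:
  "period \<phi> k = 2 * (period \<phi> k div 2)"
  "8 * \<phi> k + 8 \<le> period \<phi> k div 2"
  "2 ^ (k + 5) \<le> period \<phi> k div 2"
proof -
  obtain e where e: "block_exp \<phi> k = Suc e"
    using block_exp_ge(1)[where \<phi>=\<phi> and k=k] by (cases "block_exp \<phi> k") auto
  have half: "period \<phi> k div 2 = 2^e" by (simp add: period_def e)
  show "period \<phi> k = 2 * (period \<phi> k div 2)" by (simp add: period_def e)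
  have "8 * \<phi> k + 8 \<le> (2::nat)^(\<phi> k + 3)"
    using Suc_le_two_power[of "\<phi> k"] by (simp add: power_add)
  also have "\<dots> \<le> 2^e" using block_exp_ge(1)[where \<phi>=\<phi> and k=k] e by (intro power_increasing) auto
  finally show "8 * \<phi> k + 8 \<le> period \<phi> k div 2" by (simp add: half)
  have "(2::nat)^(k + 5) \<le> 2^e" using block_exp_ge(2)[where \<phi>=\<phi> and k=k] e by (intro power_increasing) auto
  then show "2 ^ (k + 5) \<le> period \<phi> k div 2" by (simp add: half)
qed

lemma period_gap:
  assumes "l < k"
  shows "2^(k - l) * 12 * (2 * \<phi> k + 1) * period \<phi> l \<le> period \<phi> k"
proof -
  have "12 * (2 * \<phi> k + 1) \<le> (32::nat) * 2^\<phi> k"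
    using Suc_le_two_power[of "\<phi> k"] by simp
  then have "2^(k - l) * 12 * (2 * \<phi> k + 1) * period \<phi> l \<le> 2^(k - l) * (32 * 2^\<phi> k) * 2^(block_exp \<phi> l)"
    unfolding period_def mult.assoc[of "2^(k - l)"] by (intro mult_right_mono mult_left_mono) auto
  also have "\<dots> = (2::nat)^(block_exp \<phi> l + (k - l) + \<phi> k + 5)" by (simp add: power_add)
  also have "\<dots> \<le> 2^(block_exp \<phi> k)" using block_exp_gap[OF assms] by (intro power_increasing) auto
  finally show ?thesis unfolding period_def .
qed

lemma centres_ge: "N \<in> centres \<phi> k \<Longrightarrow> period \<phi> k div 2 \<le> N"
  unfolding centres_def by (metis mem_Collect_eq mod_less_eq_dividend)

lemma sep_set_gt: "N \<in> sep_set \<phi> k \<Longrightarrow> \<phi> k < N"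
  using centres_ge[where N=N and \<phi>=\<phi> and k=k] period_props(2)[where \<phi>=\<phi> and k=k] unfolding sep_set_def by auto

lemma centres_gap:
  assumes "N \<in> centres \<phi> k" "n \<in> centres \<phi> k" "N < n"
  shows "N + period \<phi> k \<le> n"
proof -
  have "N mod period \<phi> k = n mod period \<phi> k" using assms unfolding centres_def by simp
  then have "period \<phi> k dvd n - N" using assms(3) mod_eq_dvd_iff_nat[of N n "period \<phi> k"] by simp
  then have "period \<phi> k \<le> n - N" using assms(3) by (simp add: dvd_imp_le)
  then show ?thesis using assms(3) by simp
qed

lemma sep_set_disjoint:
  assumes "N \<in> sep_set \<phi> k" "N \<in> sep_set \<phi> l"
  shows "k = l"
proof -
  have "\<not> a < b" if "N \<in> sep_set \<phi> a" "N \<in> sep_set \<phi> b" for a b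
  proof -
    have "N \<in> centres \<phi> b" using that(2) unfolding sep_set_def by simp
    then have "a < b \<Longrightarrow> \<not> near (\<phi> b) N N" using that(1) unfolding sep_set_def by blast
    then show ?thesis unfolding near_def by auto
  qed
  then show ?thesis using assms by (meson linorder_neqE_nat)
qed

lemma sep_set_separated_le:
  assumes "N \<in> sep_set \<phi> k" "n \<in> sep_set \<phi> l" "N \<noteq> n" "k \<le> l"
  shows "N + \<phi> l < n \<or> n + \<phi> l < N"
proof (cases "k = l")
  case True
  have "N \<in> centres \<phi> k" "n \<in> centres \<phi> k" using assms True unfolding sep_set_def by auto
  moreover have "\<phi> k < period \<phi> k" using period_props(1,2)[where \<phi>=\<phi> and k=k] by linarith
  ultimately show ?thesis using centres_gap[of N \<phi> k n] centres_gap[of n \<phi> k N] assms(3) True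
    by (cases "N < n") auto
next
  case False
  then have "\<not> near (\<phi> l) N n" using assms unfolding sep_set_def by auto
  then show ?thesis unfolding near_def by auto
qed

lemma sep_set_separated:
  assumes "mono \<phi>" "N \<in> sep_set \<phi> k" "n \<in> sep_set \<phi> l" "N \<noteq> n"
  shows "(N + \<phi> l < n \<or> n + \<phi> l < N) \<and> (N + \<phi> k < n \<or> n + \<phi> k < N)"
proof (cases "k \<le> l")
  case True
  then have "\<phi> k \<le> \<phi> l" using assms(1) by (simp add: mono_def)
  then show ?thesis using sep_set_separated_le[OF assms(2-4) True] by auto
next
  case False
  then have "\<phi> l \<le> \<phi> k" using assms(1) by (simp add: mono_def)
  then show ?thesis using sep_set_separated_le[OF assms(3,2)] assms(4) False by auto
qed

text \<open>Counting: A_l is what remains of the centres of level l after removing, for each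
  higher level k, the points near level-k centres; the latter are few by period_gap.\<close>
definition near_set :: "(nat \<Rightarrow> nat) \<Rightarrow> nat \<Rightarrow> nat \<Rightarrow> nat set" where
  "near_set \<phi> k M = {N. 1 \<le> N \<and> N \<le> M \<and> (\<exists>n\<in>centres \<phi> k. near (\<phi> k) N n)}"

lemma card_centres_ge: "M div period \<phi> l \<le> card {N \<in> centres \<phi> l. 1 \<le> N \<and> N \<le> M}"
proof -
  define Q where "Q = period \<phi> l"
  have Q: "Q = 2 * (Q div 2)" "Q div 2 \<ge> 1"
    using period_props[where \<phi>=\<phi> and k=l] unfolding Q_def by auto
  have sub: "(\<lambda>t. Q*t + Q div 2) ` {..<M div Q} \<subseteq> {N \<in> centres \<phi> l. 1 \<le> N \<and> N \<le> M}"
  proof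
    fix x assume "x \<in> (\<lambda>t. Q*t + Q div 2) ` {..<M div Q}"
    then obtain t where t: "t < M div Q" "x = Q*t + Q div 2" by auto
    have "x mod Q = Q div 2" using Q t(2) by (simp add: mod_mult_self3)
    moreover have "x \<le> M"
    proof -
      have "Q * (t + 1) \<le> Q * (M div Q)" using t(1) by (intro mult_left_mono) auto
      also have "\<dots> \<le> M" by simp
      finally have "Q * t + Q \<le> M" by (simp add: algebra_simps)
      then show ?thesis using t(2) Q by linarith
    qed
    ultimately show "x \<in> {N \<in> centres \<phi> l. 1 \<le> N \<and> N \<le> M}"
      using Q t unfolding centres_def Q_def by auto
  qed
  have "inj_on (\<lambda>t. Q*t + Q div 2) {..<M div Q}" using Q by (intro inj_onI) auto
  then have "M div Q = card ((\<lambda>t. Q*t + Q div 2) ` {..<M div Q})" by (simp add: card_image)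
  also have "\<dots> \<le> card {N \<in> centres \<phi> l. 1 \<le> N \<and> N \<le> M}" by (rule card_mono[OF _ sub]) auto
  finally show ?thesis unfolding Q_def .
qed

lemma near_centre_bounds:
  assumes "N \<le> M" "n \<in> centres \<phi> k" "near (\<phi> k) N n"
  shows "period \<phi> k \<le> 4 * M" "n \<le> 2 * M" "k < M"
proof -
  have n: "period \<phi> k div 2 \<le> n" using centres_ge[OF assms(2)] .
  have c: "n \<le> N + \<phi> k" using assms(3) unfolding near_def by auto
  obtain h where h: "period \<phi> k div 2 = h" by simp
  obtain t where t: "(2::nat)^(k + 5) = t" by simp
  note H = period_props[where \<phi>=\<phi> and k=k, unfolded h t] n[unfolded h]
  show "period \<phi> k \<le> 4 * M" "n \<le> 2 * M" using H c assms(1) by linarith+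
  have "(2::nat)^(k + 5) \<le> 2 * M" unfolding t using H c assms(1) by linarith
  moreover have "k < 2^k" by (rule less_exp)
  moreover have "(2::nat)^(k + 5) = 32 * 2^k" by (simp add: power_add)
  ultimately show "k < M" by linarith
qed

lemma card_near_set: "card (near_set \<phi> k M) \<le> (2*M div period \<phi> k + 1) * (2 * \<phi> k + 1)"
proof -
  define p where "p = period \<phi> k"
  define f where "f t = {p*t + p div 2 - \<phi> k .. p*t + p div 2 + \<phi> k}" for t
  have sub: "near_set \<phi> k M \<subseteq> (\<Union>t\<in>{..2*M div p}. f t)"
  proof
    fix N assume "N \<in> near_set \<phi> k M"
    then obtain n where N: "N \<le> M" "n \<in> centres \<phi> k" "near (\<phi> k) N n"
      unfolding near_set_def by auto
    have "n div p \<le> 2*M div p" using near_centre_bounds(2)[OF N] by (rule div_le_mono)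
    moreover have "N \<in> f (n div p)"
    proof -
      have "n mod p = p div 2" using N(2) unfolding centres_def p_def by simp
      then have "n = p * (n div p) + p div 2" by (metis div_mult_mod_eq mult.commute)
      then show ?thesis using N(3) unfolding f_def near_def
        by (metis (no_types, lifting) add.commute atLeastAtMost_iff le_diff_conv)
    qed
    ultimately show "N \<in> (\<Union>t\<in>{..2*M div p}. f t)" by auto
  qed
  have "card (near_set \<phi> k M) \<le> card (\<Union>t\<in>{..2*M div p}. f t)"
    by (rule card_mono[OF _ sub]) (auto simp: f_def)
  also have "\<dots> \<le> (\<Sum>t\<in>{..2*M div p}. card (f t))" by (rule card_UN_le) auto
  also have "\<dots> \<le> (\<Sum>t\<in>{..2*M div p}. 2 * \<phi> k + 1)" by (intro sum_mono) (auto simp: f_def)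
  finally show ?thesis unfolding p_def by simp
qed

lemma near_set_small:
  assumes "l < k"
  shows "real (card (near_set \<phi> k M)) \<le> real M / (2 * real (period \<phi> l)) * (1/2)^(k - l)"
proof (cases "near_set \<phi> k M = {}")
  case False
  then obtain N n where N: "N \<le> M" "n \<in> centres \<phi> k" "near (\<phi> k) N n"
    unfolding near_set_def by auto
  define p where "p = real (period \<phi> k)"
  define a where "a = 2 * real (\<phi> k) + 1"
  define Q where "Q = real (period \<phi> l)"
  have pos: "p > 0" "a > 0" "Q > 0" unfolding p_def a_def Q_def period_def by auto
  have p4: "p \<le> 4 * real M" using near_centre_bounds(1)[OF N] unfolding p_def by linarith
  have "real (2^(k - l) * 12 * (2 * \<phi> k + 1) * period \<phi> l) \<le> real (period \<phi> k)"
    using period_gap[OF assms] by (simp only: of_nat_le_iff)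
  then have gap: "2^(k - l) * 12 * a * Q \<le> p" unfolding p_def a_def Q_def by (simp add: algebra_simps)
  have "real (card (near_set \<phi> k M)) \<le> real ((2*M div period \<phi> k + 1) * (2 * \<phi> k + 1))"
    using card_near_set by (simp only: of_nat_le_iff)
  also have "\<dots> = (real (2*M div period \<phi> k) + 1) * a" unfolding a_def by (simp add: algebra_simps)
  also have "\<dots> \<le> (6 * real M / p) * a"
  proof (rule mult_right_mono)
    have "real (2*M div period \<phi> k) \<le> 2 * real M / p"
      unfolding p_def using of_nat_div_le_of_nat[of "2*M"] by simp
    moreover have "1 \<le> 4 * real M / p" using p4 pos by simp
    ultimately show "real (2*M div period \<phi> k) + 1 \<le> 6 * real M / p" by argo
  qed (use pos in simp)
  also have "\<dots> = 6 * real M * a / p" by simp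
  also have "\<dots> \<le> 6 * real M * a / (2^(k - l) * 12 * a * Q)"
    using gap pos by (intro divide_left_mono) auto
  also have "\<dots> = real M / (2 * Q) * (1/2)^(k - l)"
    using pos by (simp add: power_one_over field_simps)
  finally show ?thesis unfolding Q_def .
qed simp

lemma half_powers_sum: "(\<Sum>k\<in>{l<..<M}. (1/2::real)^(k - l)) = 1 - (1/2)^(M - l - 1)"
  if "l < M"
  using that
proof (induction M)
  case (Suc M)
  show ?case
  proof (cases "l < M")
    case True
    have "{l<..<Suc M} = insert M {l<..<M}" using True by auto
    moreover have "M - l = Suc (M - l - 1)" using True by simp
    ultimately show ?thesis using Suc True by simp
  next
    case False
    then have "M = l" using Suc by simp
    then show ?thesis by simp
  qed
qed simp

lemma half_powers_sum_le: "(\<Sum>k\<in>{l<..<M}. (1/2::real)^(k - l)) \<le> 1"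
  by (cases "l < M") (simp_all add: half_powers_sum)

lemma centres_covered:
  "{N \<in> centres \<phi> l. 1 \<le> N \<and> N \<le> M}
     \<subseteq> {N \<in> sep_set \<phi> l. 1 \<le> N \<and> N \<le> M} \<union> (\<Union>k\<in>{l<..<M}. near_set \<phi> k M)"
proof
  fix N assume N: "N \<in> {N \<in> centres \<phi> l. 1 \<le> N \<and> N \<le> M}"
  show "N \<in> {N \<in> sep_set \<phi> l. 1 \<le> N \<and> N \<le> M} \<union> (\<Union>k\<in>{l<..<M}. near_set \<phi> k M)"
  proof (cases "N \<in> sep_set \<phi> l")
    case False
    then obtain k n where kn: "k > l" "n \<in> centres \<phi> k" "near (\<phi> k) N n"
      using N unfolding sep_set_def by auto
    have "k < M" using near_centre_bounds(3)[OF _ kn(2,3)] N by auto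
    then show ?thesis using kn N unfolding near_set_def by auto
  qed (use N in auto)
qed

lemma sep_set_density:
  "\<exists>c>0. \<exists>M0. \<forall>M\<ge>M0. c * real M \<le> real (card {N \<in> sep_set \<phi> l. 1 \<le> N \<and> N \<le> M})"
proof (intro exI conjI allI impI)
  define Q where "Q = period \<phi> l"
  have Q0: "Q > 0" unfolding Q_def period_def by simp
  show "1 / (4 * real Q) > 0" using Q0 by simp
  fix M assume M: "M \<ge> 4 * Q"
  define S where "S = {N \<in> sep_set \<phi> l. 1 \<le> N \<and> N \<le> M}"
  define C where "C = {N \<in> centres \<phi> l. 1 \<le> N \<and> N \<le> M}"
  have "card C \<le> card (S \<union> (\<Union>k\<in>{l<..<M}. near_set \<phi> k M))"
    using centres_covered[where \<phi>=\<phi> and l=l and M=M] unfolding S_def C_def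
    by (intro card_mono) (auto simp: near_set_def)
  also have "\<dots> \<le> card S + (\<Sum>k\<in>{l<..<M}. card (near_set \<phi> k M))"
    using card_Un_le card_UN_le[of "{l<..<M}" "\<lambda>k. near_set \<phi> k M"] by (meson add_left_mono finite_greaterThanLessThan le_trans)
  finally have "real (card C) \<le> real (card S) + (\<Sum>k\<in>{l<..<M}. real (card (near_set \<phi> k M)))"
    by (metis of_nat_add of_nat_le_iff of_nat_sum)
  also have "(\<Sum>k\<in>{l<..<M}. real (card (near_set \<phi> k M)))
      \<le> (\<Sum>k\<in>{l<..<M}. real M / (2 * real Q) * (1/2)^(k - l))"
  proof (rule sum_mono)
    fix k assume "k \<in> {l<..<M}"
    then show "real (card (near_set \<phi> k M)) \<le> real M / (2 * real Q) * (1/2)^(k - l)"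
      unfolding Q_def by (intro near_set_small) simp
  qed
  also have "\<dots> = real M / (2 * real Q) * (\<Sum>k\<in>{l<..<M}. (1/2)^(k - l))"
    by (simp add: sum_distrib_left)
  also have "\<dots> \<le> real M / (2 * real Q)" using half_powers_sum_le by (intro mult_left_le) auto
  finally have upper: "real (card C) \<le> real (card S) + real M / (2 * real Q)" by simp
  have "real M / Q - 1 \<le> real (M div Q)"
  proof -
    have "M = Q * (M div Q) + M mod Q" by simp
    then have "M < Q * (M div Q) + Q" using mod_less_divisor[OF Q0, of M] by linarith
    then have "real M < real (Q * (M div Q) + Q)" by (simp only: of_nat_less_iff)
    then have "real M < real Q * (real (M div Q) + 1)" by (simp add: algebra_simps)
    then have "real M / real Q < real (M div Q) + 1"
      using Q0 by (simp add: divide_less_eq mult.commute)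
    then show ?thesis by linarith
  qed
  also have "\<dots> \<le> real (card C)" using card_centres_ge[where \<phi>=\<phi> and l=l and M=M] unfolding C_def Q_def by simp
  finally have lower: "real M / Q - 1 \<le> real (card C)" .
  have "1 \<le> real M / (4 * real Q)" using M Q0 by (simp add: le_divide_eq)
  then show "1 / (4 * real Q) * real M \<le> real (card S)"
    using upper lower Q0 by (simp add: field_simps)
qed

section \<open>Targets and block lengths\<close>

text \<open>An enumeration of all targets: a Gaussian-rational polynomial p_k together with a
  radius R_k, to be approximated within 1/(R_k+1) on the closed disc of radius R_k.\<close>
definition target :: "nat \<Rightarrow> (rat \<times> rat) list \<times> nat" where
  "target k = from_nat k"

definition target_poly :: "nat \<Rightarrow> (rat \<times> rat) list" where
  "target_poly k = fst (target k)"

definition target_radius :: "nat \<Rightarrow> nat" where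
  "target_radius k = snd (target k)"

definition target_deg :: "nat \<Rightarrow> nat" where
  "target_deg k = length (target_poly k)"

definition target_coeff :: "nat \<Rightarrow> nat \<Rightarrow> complex" where
  "target_coeff k i = (if i < target_deg k then gauss_rat (target_poly k ! i) else 0)"

definition target_tol :: "nat \<Rightarrow> real" where
  "target_tol k = 1 / (real (target_radius k) + 1)"

lemma rat_poly_target: "rat_poly (target_poly k) z = (\<Sum>j<target_deg k. target_coeff k j * z^j)"
  unfolding rat_poly_def target_deg_def target_coeff_def by (intro sum.cong) auto

definition block_len_ok :: "nat \<Rightarrow> nat \<Rightarrow> bool" where
  "block_len_ok k J \<longleftrightarrow> target_deg k \<le> J \<and> (\<forall>i. norm (target_coeff k i) * fact i \<le> 2^J) \<and>
     (\<Sum>j. (2 * real (target_radius k))^(j + J + 1) / fact (j + J + 1)) < target_tol k"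

lemma block_len_ok_eventually: "\<exists>J0. \<forall>J\<ge>J0. block_len_ok k J"
proof -
  define C where "C = (\<Sum>i<target_deg k. norm (target_coeff k i) * fact i)"
  obtain J1 :: nat where J1: "C \<le> real J1" using real_arch_simple by blast
  have tol: "target_tol k > 0" unfolding target_tol_def by simp
  obtain J2 where J2: "\<forall>n\<ge>J2. norm (\<Sum>i. (2 * real (target_radius k))^(i + n) / fact (i + n)) < target_tol k"
    using suminf_exist_split[OF tol summable_exp_series] by blast
  have "block_len_ok k J" if J: "J \<ge> max (target_deg k) (max J1 J2)" for J
  proof -
    have "norm (target_coeff k i) * fact i \<le> 2^J" for i
    proof (cases "i < target_deg k")
      case True
      have "norm (target_coeff k i) * fact i \<le> C" unfolding C_def
        using True by (intro member_le_sum) auto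
      also have "\<dots> \<le> real J" using J1 J by linarith
      also have "\<dots> \<le> 2^J" using less_exp[of J] by (simp add: less_imp_le)
      finally show ?thesis .
    qed (simp add: target_coeff_def)
    moreover have "(\<Sum>j. (2 * real (target_radius k))^(j + J + 1) / fact (j + J + 1)) < target_tol k"
      using J2[rule_format, of "J + 1"] J by (simp add: add.assoc)
    ultimately show ?thesis using J unfolding block_len_ok_def by simp
  qed
  then show ?thesis by blast
qed

definition min_block_len :: "nat \<Rightarrow> nat" where
  "min_block_len k = (SOME J0. \<forall>J\<ge>J0. block_len_ok k J)"

definition block_len :: "nat \<Rightarrow> nat" where
  "block_len k = (\<Sum>i\<le>k. min_block_len i)"

lemma mono_block_len: "mono block_len"
  unfolding mono_def block_len_def by (auto intro!: sum_mono2)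

lemma block_len_ok: "block_len_ok k (block_len k)"
proof -
  have "min_block_len k \<le> block_len k" unfolding block_len_def by (intro member_le_sum) auto
  moreover have "\<forall>J\<ge>min_block_len k. block_len_ok k J"
    unfolding min_block_len_def by (rule someI_ex[OF block_len_ok_eventually])
  ultimately show ?thesis by blast
qed

lemma target_deg_le: "target_deg k \<le> block_len k"
  and target_coeff_le: "norm (target_coeff k i) * fact i \<le> 2 ^ block_len k"
  and exp_tail_lt: "(\<Sum>j. (2 * real (target_radius k))^(j + block_len k + 1) / fact (j + block_len k + 1))
      < target_tol k"
  using block_len_ok unfolding block_len_ok_def by blast+

lemma scaled_target_coeff_bound:
  assumes mu: "norm \<mu> \<ge> 1" and len: "block_len l \<le> i + m"
  shows "norm (target_coeff l i / shift_weight \<mu> i m) \<le> 2^(i + m) / fact (i + m)"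
proof -
  have "norm (target_coeff l i / shift_weight \<mu> i m)
      = norm (target_coeff l i) * (1 / norm (shift_weight \<mu> i m))"
    by (simp add: norm_divide)
  also have "\<dots> \<le> norm (target_coeff l i) * (fact i / fact (i + m))"
    by (intro mult_left_mono inverse_shift_weight_le[OF mu]) auto
  also have "\<dots> = norm (target_coeff l i) * fact i / fact (i + m)" by simp
  also have "\<dots> \<le> 2 ^ block_len l / fact (i + m)"
    using target_coeff_le by (intro divide_right_mono) auto
  also have "\<dots> \<le> 2^(i + m) / fact (i + m)"
    using len by (intro divide_right_mono power_increasing) auto
  finally show ?thesis .
qed

section \<open>The frequently hypercyclic vector\<close>

abbreviation A :: "nat \<Rightarrow> nat set" where
  "A \<equiv> sep_set block_len"

definition block_pos :: "nat \<Rightarrow> nat \<times> nat \<times> nat \<Rightarrow> bool" where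
  "block_pos j t \<longleftrightarrow> (case t of (k, n, i) \<Rightarrow> n \<in> A k \<and> i < target_deg k \<and> j = n + i)"

definition fhc_coeff :: "complex \<Rightarrow> nat \<Rightarrow> complex" where
  "fhc_coeff \<mu> j = (if \<exists>t. block_pos j t
     then (case THE t. block_pos j t of (k, n, i) \<Rightarrow> target_coeff k i / shift_weight \<mu> i n)
     else 0)"

definition fhc_vector :: "complex \<Rightarrow> complex \<Rightarrow> complex" where
  "fhc_vector \<mu> = power_series (fhc_coeff \<mu>)"

lemma block_ends_before:
  assumes "n \<in> A k" "n' \<in> A l" "n' < n" "i < target_deg l"
  shows "n' + i < n"
  using sep_set_separated[OF mono_block_len assms(2,1)] assms(3,4) target_deg_le[of l] by auto

lemma block_pos_unique:
  assumes "block_pos j (k, n, i)" "block_pos j (k', n', i')"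
  shows "(k, n, i) = (k', n', i')"
proof -
  have a: "n \<in> A k" "i < target_deg k" "j = n + i" "n' \<in> A k'" "i' < target_deg k'" "j = n' + i'"
    using assms unfolding block_pos_def by auto
  have "n = n'"
    using block_ends_before[of n k n' k' i'] block_ends_before[of n' k' n k i] a
    by (cases n n' rule: linorder_cases) auto
  moreover then have "k = k'" using sep_set_disjoint a by blast
  ultimately show ?thesis using a by simp
qed

lemma fhc_coeff_at:
  assumes "n \<in> A k" "i < target_deg k"
  shows "fhc_coeff \<mu> (n + i) = target_coeff k i / shift_weight \<mu> i n"
proof -
  have pos: "block_pos (n + i) (k, n, i)" using assms unfolding block_pos_def by simp
  have "t = (k, n, i)" if "block_pos (n + i) t" for t
    using that block_pos_unique[OF _ pos] by (cases t) auto
  then have "(THE t. block_pos (n + i) t) = (k, n, i)"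
    using pos by (intro the_equality)
  then show ?thesis using pos unfolding fhc_coeff_def by auto
qed

lemma fhc_coeff_bound:
  assumes mu: "norm \<mu> \<ge> 1"
  shows "norm (fhc_coeff \<mu> j) \<le> 2^j / fact j"
proof (cases "\<exists>t. block_pos j t")
  case True
  then obtain k n i where "block_pos j (k, n, i)" by auto
  then have a: "n \<in> A k" "i < target_deg k" "j = n + i" unfolding block_pos_def by auto
  have "block_len k \<le> i + n" using sep_set_gt[OF a(1)] by simp
  then show ?thesis
    using scaled_target_coeff_bound[OF mu] fhc_coeff_at[OF a(1,2)] a(3) by (simp add: add.commute)
qed (simp add: fhc_coeff_def)

lemma entire_coeffs_fhc: "norm \<mu> \<ge> 1 \<Longrightarrow> entire_coeffs (fhc_coeff \<mu>)"
  by (intro entire_coeffs_if_fact_bound fhc_coeff_bound)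

lemma shifted_coeff_error:
  fixes j :: nat
  assumes mu: "norm \<mu> \<ge> 1" and N: "N \<in> A k"
  defines "err \<equiv> fhc_coeff \<mu> (j + N) * shift_weight \<mu> j N - target_coeff k j"
  shows "err = 0 \<or> (block_len k < j \<and> norm err \<le> 2^j / fact j)"
proof (cases "j < target_deg k")
  case True
  then show ?thesis
    using fhc_coeff_at[OF N True] shift_weight_nonzero[OF mu] unfolding err_def by (simp add: add.commute)
next
  case False
  then have target0: "target_coeff k j = 0" by (simp add: target_coeff_def)
  show ?thesis
  proof (cases "\<exists>t. block_pos (j + N) t")
    case True
    then obtain l n i where "block_pos (j + N) (l, n, i)" by auto
    then have a: "n \<in> A l" "i < target_deg l" "j + N = n + i" unfolding block_pos_def by auto
    have "n \<noteq> N"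
    proof
      assume "n = N"
      then have "l = k" using sep_set_disjoint a(1) N by blast
      then show False using a \<open>n = N\<close> False by simp
    qed
    moreover have "\<not> n < N" using block_ends_before[OF N a(1) _ a(2)] a(3) by auto
    ultimately have sep: "N + block_len l < n" "N + block_len k < n"
      using sep_set_separated[OF mono_block_len N a(1)] by auto
    define m where "m = n - N"
    have n: "n = m + N" and j: "j = i + m" using sep a(3) unfolding m_def by auto
    have "shift_weight \<mu> i n = shift_weight \<mu> i m * shift_weight \<mu> j N"
      unfolding n j by (rule shift_weight_add)
    then have "err = target_coeff l i / shift_weight \<mu> i m"
      using fhc_coeff_at[OF a(1,2)] a(3) shift_weight_nonzero[OF mu, of j N]
        shift_weight_nonzero[OF mu, of i m]
      unfolding err_def target0 by (simp add: field_simps)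
    moreover have "block_len l \<le> i + m" using sep(1) n by simp
    ultimately have "norm err \<le> 2^j / fact j" using scaled_target_coeff_bound[OF mu] j by simp
    moreover have "block_len k < j" using sep(2) n j by simp
    ultimately show ?thesis by blast
  qed (simp add: fhc_coeff_def err_def target0)
qed

lemma orbit_near_target:
  assumes mu: "norm \<mu> \<ge> 1" and N: "N \<in> A k" and z: "norm z \<le> real (target_radius k)"
  shows "norm ((T_op \<mu> ^^ N) (fhc_vector \<mu>) z - rat_poly (target_poly k) z) < target_tol k"
proof -
  define a where "a j = fhc_coeff \<mu> (j + N) * shift_weight \<mu> j N" for j
  define g where "g j = a j - target_coeff k j" for j
  have iter: "(T_op \<mu> ^^ N) (fhc_vector \<mu>) = power_series a" "entire_coeffs a"
    using T_op_iterate_power_series[OF entire_coeffs_fhc[OF mu], where \<mu>=\<mu> and N=N]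
    unfolding a_def fhc_vector_def by auto
  have s1: "(\<lambda>j. a j * z^j) sums power_series a z"
    using iter(2) unfolding power_series_def entire_coeffs_def by (simp add: summable_sums)
  have s2: "(\<lambda>j. target_coeff k j * z^j) sums rat_poly (target_poly k) z"
    unfolding rat_poly_target by (rule sums_finite) (auto simp: target_coeff_def)
  have "(\<lambda>j. g j * z^j) sums (power_series a z - rat_poly (target_poly k) z)"
    using sums_diff[OF s1 s2] unfolding g_def by (simp add: algebra_simps)
  then have "power_series a z - rat_poly (target_poly k) z = (\<Sum>j. g j * z^j)"
    by (rule sums_unique)
  also have "norm \<dots> \<le> (\<Sum>i. (2 * real (target_radius k))^(i + block_len k + 1) / fact (i + block_len k + 1))"
    using late_series_bound[OF shifted_coeff_error[OF mu N] z] unfolding g_def a_def by simp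
  also have "\<dots> < target_tol k" by (rule exp_tail_lt)
  finally show ?thesis using iter(1) by simp
qed

lemma orbit_entire:
  assumes "norm \<mu> \<ge> 1"
  shows "(T_op \<mu> ^^ N) (fhc_vector \<mu>) \<in> entire_fns"
  using T_op_iterate_power_series[OF entire_coeffs_fhc[OF assms], where \<mu>=\<mu> and N=N]
  unfolding fhc_vector_def by (simp add: power_series_entire)

text \<open>For any entire f, compact K and e > 0, the whole orbit segment indexed by some A_k stays
  uniformly e-close to f on K: choose a target within e/2 of f on a disc containing K whose
  tolerance is below e/2.\<close>
lemma orbit_enters_neighbourhood:
  assumes mu: "norm \<mu> \<ge> 1" and f: "f \<in> entire_fns" and K: "compact K" and e: "e > 0"
  shows "\<exists>k. \<forall>N\<in>A k. \<forall>z\<in>K. cmod ((T_op \<mu> ^^ N) (fhc_vector \<mu>) z - f z) < e"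
proof -
  obtain b where b: "\<forall>z\<in>K. norm z \<le> b" using compact_imp_bounded[OF K] bounded_iff by blast
  obtain m :: nat where m: "max b (2/e) \<le> real m" using real_arch_simple by blast
  obtain L where L: "\<forall>z. norm z \<le> real m \<longrightarrow> norm (f z - rat_poly L z) < e/2"
    using rat_poly_approx[of f "e/2" "real m"] f e unfolding entire_fns_def by auto
  define k where "k = to_nat (L, m)"
  have target: "target_poly k = L" "target_radius k = m"
    unfolding target_poly_def target_radius_def target_def k_def by simp_all
  have "2 < e * (real m + 1)" using m e by (simp add: field_simps)
  then have tol: "target_tol k < e/2" unfolding target_tol_def target using e by (simp add: field_simps)
  have "cmod ((T_op \<mu> ^^ N) (fhc_vector \<mu>) z - f z) < e" if N: "N \<in> A k" and z: "z \<in> K" for N z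
  proof -
    define x where "x = (T_op \<mu> ^^ N) (fhc_vector \<mu>)"
    have zm: "norm z \<le> real m" using b z m by force
    have "norm (x z - rat_poly L z) < e/2"
      using orbit_near_target[OF mu N, of z] zm tol unfolding target x_def by simp
    moreover have "norm (f z - rat_poly L z) < e/2" using L zm by blast
    moreover have "norm (x z - f z) \<le> norm (x z - rat_poly L z) + norm (f z - rat_poly L z)"
      using norm_triangle_ineq4[of "x z - rat_poly L z" "f z - rat_poly L z"] by simp
    ultimately show ?thesis unfolding x_def by linarith
  qed
  then show ?thesis by blast
qed

section \<open>Frequent hypercyclicity\<close>

lemma openin_H_C: "openin H_C = co_open"
  unfolding H_C_def by (rule topology_inverse'[OF istopology_co_open])

lemma topspace_H_C: "topspace H_C = entire_fns"
proof
  show "topspace H_C \<subseteq> entire_fns" unfolding topspace_def openin_H_C co_open_def by auto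
  have "co_open entire_fns" unfolding co_open_def by (auto intro!: exI[of _ "{}"] exI[of _ 1])
  then show "entire_fns \<subseteq> topspace H_C" unfolding topspace_def openin_H_C by auto
qed

lemma lower_density_pos:
  assumes c: "c > 0" and count: "\<forall>M\<ge>M0. c * real M \<le> real (card {N \<in> B. 1 \<le> N \<and> N \<le> M})"
    and sub: "B \<subseteq> S"
  shows "lower_density S > 0"
proof -
  have lower: "ereal c \<le> lower_density S"
    unfolding lower_density_def
  proof (subst le_Liminf_iff, intro allI impI)
    fix y assume y: "y < ereal c"
    show "\<forall>\<^sub>F M in sequentially. y < ereal (real (card {n \<in> S. 1 \<le> n \<and> n \<le> M}) / real M)"
    proof (rule eventually_sequentiallyI[of "max M0 1"])
      fix M assume M: "max M0 1 \<le> M"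
      have "card {N \<in> B. 1 \<le> N \<and> N \<le> M} \<le> card {n \<in> S. 1 \<le> n \<and> n \<le> M}"
        using sub by (intro card_mono) auto
      then have "c * real M \<le> real (card {n \<in> S. 1 \<le> n \<and> n \<le> M})" using count M by force
      then have "c \<le> real (card {n \<in> S. 1 \<le> n \<and> n \<le> M}) / real M"
        using M by (simp add: le_divide_eq)
      then show "y < ereal (real (card {n \<in> S. 1 \<le> n \<and> n \<le> M}) / real M)"
        using y by (meson ereal_less_eq(3) less_le_trans)
    qed
  qed
  have "(0::ereal) < ereal c" using c by simp
  then show ?thesis using lower by (rule less_le_trans)
qed

theorem proposition4p10:
  fixes \<mu> :: complex
  assumes "norm \<mu> \<ge> 1"
  shows "frequently_hypercyclic H_C (T_op \<mu>)"
  unfolding frequently_hypercyclic_def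
proof (intro bexI allI impI)
  show "fhc_vector \<mu> \<in> topspace H_C"
    unfolding topspace_H_C fhc_vector_def by (rule power_series_entire[OF entire_coeffs_fhc[OF assms]])
  fix U assume U: "openin H_C U \<and> U \<noteq> {}"
  then obtain f where f: "f \<in> U" by auto
  with U obtain K e where Ke: "compact K" "e > 0"
    "{g \<in> entire_fns. \<forall>z\<in>K. cmod (g z - f z) < e} \<subseteq> U"
    unfolding openin_H_C co_open_def by blast
  have "f \<in> entire_fns" using U f unfolding openin_H_C co_open_def by blast
  then obtain k where k: "\<forall>N\<in>A k. \<forall>z\<in>K. cmod ((T_op \<mu> ^^ N) (fhc_vector \<mu>) z - f z) < e"
    using orbit_enters_neighbourhood[OF assms _ Ke(1,2)] by blast
  have "(T_op \<mu> ^^ N) (fhc_vector \<mu>) \<in> U" if "N \<in> A k" for N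
    using k that orbit_entire[OF assms, of N] Ke(3) by blast
  then have sub: "A k \<subseteq> {n. (T_op \<mu> ^^ n) (fhc_vector \<mu>) \<in> U}" by blast
  obtain c M0 where "c > 0" "\<forall>M\<ge>M0. c * real M \<le> real (card {N \<in> A k. 1 \<le> N \<and> N \<le> M})"
    using sep_set_density by blast
  from lower_density_pos[OF this sub]
  show "lower_density {n. (T_op \<mu> ^^ n) (fhc_vector \<mu>) \<in> U} > 0" .
qed

end
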